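(* Suppose each $f_i$ is continuously differentiable and there exist $\mu>0$, $L>0$ with $-L\le\frac1{M_i}f_i'(w)\le-\mu$ for all $i$ and all $w\in\mathbb R$. Let $\omega_b$ solve the blended dynamics and let $\tilde f(t):=Y^TM^{-1/2}\big(f(\mathbb 1_N\omega_b(t))+\xi(t)\big)$. If $C:=\max_{i}\sup_{t>0}|\dot\xi_i(t)|/M_i$ is finite, then for all $t>0$, $$\Big|\frac{d\tilde f}{dt}\Big|^2\le 2NM_bC^2\Big(1+\frac L\mu\Big)^2+\frac{2NL^2}{M_b}\,|f_b(\omega_b(0))+\xi_b(0_+)|^2e^{-2\mu t}.$$ If $C_{\lim}:=\max_i\limsup_{t\to\infty}|\dot\xi_i(t)|/M_i$ is finite, then $$\limsup_{t\to\infty}\Big|\frac{d\tilde f}{dt}\Big|^2\le 2NM_bC_{\lim}^2\Big(1+\frac L\mu\Big)^2.$$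
   Context: $N\ge2$ nodes with $M_i>0$, $M=\mathrm{diag}(M_1,\dots,M_N)$, $M_b=\frac1N\sum_iM_i$; functions $f_i:\mathbb R\to\mathbb R$ with $f_i(0)=0$, $f(\omega)=(f_1(\omega_1),\dots,f_N(\omega_N))^T$, $f_b(w)=\frac1N\sum_if_i(w)$. Disturbances $\xi=(\xi_1,\dots,\xi_N)^T$ are continuously differentiable on $(0,\infty)$, possibly with a finite jump at $t=0$ ($\xi(0_+)$ the right limit); $\xi_b=\frac1N\sum_i\xi_i$. The blended dynamics is the scalar ODE $M_b\dot\omega_b=f_b(\omega_b)+\xi_b(t)$ with some initial value $\omega_b(0)$. $\mathbb 1_N$ is the all-ones vector, and $Y\in\mathbb R^{N\times(N-1)}$ is a matrix whose columns form an orthonormal basis of the null space of $\mathbb 1_N^TM^{1/2}$. $|\cdot|$ is the Euclidean norm. *)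

theory Defs
  imports "HOL-Analysis.Analysis"
begin

text \<open>Nodes are indexed by 0..N-1; the columns of Y by 0..N-2.
  Vectors/matrices are functions nat => real with explicit bounds.\<close>

definition avg :: "nat \<Rightarrow> (nat \<Rightarrow> real) \<Rightarrow> real" where
  "avg N g = (\<Sum>i<N. g i) / real N"

text \<open>Y has orthonormal columns spanning the null space of 1^T M^(1/2)
  (N-1 orthonormal vectors in an (N-1)-dimensional space form a basis).\<close>
definition Y_basis :: "nat \<Rightarrow> (nat \<Rightarrow> real) \<Rightarrow> (nat \<Rightarrow> nat \<Rightarrow> real) \<Rightarrow> bool" where
  "Y_basis N M Y \<longleftrightarrow>
     (\<forall>k<N-1. \<forall>l<N-1. (\<Sum>i<N. Y i k * Y i l) = (if k = l then 1 else 0)) \<and>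
     (\<forall>k<N-1. (\<Sum>i<N. sqrt (M i) * Y i k) = 0)"

definition ftilde_comp :: "nat \<Rightarrow> (nat \<Rightarrow> real) \<Rightarrow> (nat \<Rightarrow> nat \<Rightarrow> real)
     \<Rightarrow> (nat \<Rightarrow> real \<Rightarrow> real) \<Rightarrow> real \<Rightarrow> (nat \<Rightarrow> real) \<Rightarrow> nat \<Rightarrow> real" where
  "ftilde_comp N M Y f w x k = (\<Sum>i<N. Y i k * (f i w + x i) / sqrt (M i))"

end

(* The scalar z = f_b(omega_b) + xi_b, which equals M_b times the derivative of omega_b (the
   imbalance below), satisfies the linear ODE z' = a z + xi_b' with a = avg f'(omega_b) / M_b
   <= -mu. A comparison argument therefore bounds |z t| by |z(T+)| e^(-mu (t - T)) + C M_b / mu.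
   The derivative of ftilde is Y^T v with v_i = (f_i'(omega_b) z / M_b + xi_i') / sqrt M_i, so
   Bessel's inequality for the orthonormal columns of Y gives
   |ftilde'|^2 <= sum v_i^2 <= N M_b (L |z| / M_b + C)^2, and (a + b)^2 <= 2 a^2 + 2 b^2 splits
   this into the constant and the decaying part. For the limsup, restart the estimate at a late
   time T after which every |xi_i'| / M_i stays below a given y > C_lim, and let y decrease to
   C_lim. *)

theory Submission
  imports Defs "HOL-Real_Asymp.Real_Asymp"
begin

lemma DERIV_neg_above_level_imp_le:
  fixes U U' :: "real \<Rightarrow> real"
  assumes der: "\<And>t. T < t \<Longrightarrow> (U has_real_derivative U' t) (at t)"
    and lim: "(U \<longlongrightarrow> u0) (at_right T)" and "u0 \<le> c"
    and decr: "\<And>t. T < t \<Longrightarrow> c < U t \<Longrightarrow> U' t < 0"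
    and "T < t1"
  shows "U t1 \<le> c"
proof (rule ccontr)
  assume "\<not> U t1 \<le> c"
  then have "u0 < U t1" using \<open>u0 \<le> c\<close> by linarith
  then have "\<forall>\<^sub>F t in at_right T. U t < U t1 \<and> t \<in> {T<..<t1}"
    by (intro eventually_conj order_tendstoD(2)[OF lim] eventually_at_right_real \<open>T < t1\<close>)
  then obtain a where a: "U a < U t1" "T < a" "a < t1"
    using eventually_happens[of _ "at_right T"] by auto
  have "continuous_on {a..t1} U"
    using a by (intro continuous_at_imp_continuous_on ballI DERIV_isCont[OF der]) auto
  then obtain p where p: "p \<in> {a..t1}" "\<And>t. t \<in> {a..t1} \<Longrightarrow> U t \<le> U p"
    using continuous_attains_sup[of "{a..t1}" U] a by auto
  have "U t1 \<le> U p" using p a by auto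
  then have "c < U p" "a < p"
    using p(1) a(1) \<open>\<not> U t1 \<le> c\<close> by (auto simp: order.order_iff_strict)
  then obtain d where "d > 0" "\<And>h. 0 < h \<Longrightarrow> h < d \<Longrightarrow> U p < U (p - h)"
    using DERIV_neg_dec_left[OF der decr] by (metis a(2) order.strict_trans)
  then have "U p < U (p - min (d / 2) (p - a))" using \<open>a < p\<close> by auto
  moreover have "p - min (d / 2) (p - a) \<in> {a..t1}" using p \<open>d > 0\<close> by auto
  ultimately show False using p(2) by fastforce
qed

lemma linear_ode_upper_bound:
  fixes z a b :: "real \<Rightarrow> real"
  assumes der: "\<And>t. T < t \<Longrightarrow> (z has_real_derivative a t * z t + b t) (at t)"
    and lim: "(z \<longlongrightarrow> z0) (at_right T)"
    and a: "\<And>t. T < t \<Longrightarrow> a t \<le> - \<mu>" and b: "\<And>t. T < t \<Longrightarrow> b t \<le> B"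
    and "\<mu> > 0" and "B \<ge> 0" and "T < t1"
  shows "z t1 \<le> \<bar>z0\<bar> * exp (- \<mu> * (t1 - T)) + B / \<mu>"
proof -
  define U where "U t = z t - \<bar>z0\<bar> * exp (- \<mu> * (t - T)) - B / \<mu>" for t
  have "U t1 \<le> 0"
  proof (rule DERIV_neg_above_level_imp_le[where U = U])
    show "(U has_real_derivative a t * z t + b t + \<mu> * \<bar>z0\<bar> * exp (- \<mu> * (t - T))) (at t)"
      if "T < t" for t
      unfolding U_def using der[OF that] by (auto intro!: derivative_eq_intros)
    show "(U \<longlongrightarrow> z0 - \<bar>z0\<bar> - B / \<mu>) (at_right T)"
      unfolding U_def by (auto intro!: tendsto_eq_intros lim)
    show "z0 - \<bar>z0\<bar> - B / \<mu> \<le> 0"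
      using \<open>\<mu> > 0\<close> \<open>B \<ge> 0\<close> by (smt (verit) abs_ge_self divide_nonneg_pos)
    show "a t * z t + b t + \<mu> * \<bar>z0\<bar> * exp (- \<mu> * (t - T)) < 0" if "T < t" "0 < U t" for t
    proof -
      have "0 < z t" using that \<open>\<mu> > 0\<close> \<open>B \<ge> 0\<close>
        by (smt (verit) U_def divide_nonneg_pos exp_gt_zero mult_nonneg_nonneg abs_ge_zero)
      then have "a t * z t + b t \<le> - \<mu> * z t + B"
        using a[OF \<open>T < t\<close>] b[OF \<open>T < t\<close>] by (smt (verit) mult_right_mono)
      also have "\<dots> = - \<mu> * U t - \<mu> * \<bar>z0\<bar> * exp (- \<mu> * (t - T))"
        using \<open>\<mu> > 0\<close> by (simp add: U_def field_simps)
      finally show ?thesis using mult_pos_pos[OF \<open>\<mu> > 0\<close> \<open>0 < U t\<close>] by linarith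
    qed
  qed fact
  then show ?thesis by (simp add: U_def)
qed

lemma linear_ode_abs_bound:
  fixes z a b :: "real \<Rightarrow> real"
  assumes der: "\<And>t. T < t \<Longrightarrow> (z has_real_derivative a t * z t + b t) (at t)"
    and lim: "(z \<longlongrightarrow> z0) (at_right T)"
    and a: "\<And>t. T < t \<Longrightarrow> a t \<le> - \<mu>" and b: "\<And>t. T < t \<Longrightarrow> \<bar>b t\<bar> \<le> B"
    and "\<mu> > 0" and "B \<ge> 0" and "T < t1"
  shows "\<bar>z t1\<bar> \<le> \<bar>z0\<bar> * exp (- \<mu> * (t1 - T)) + B / \<mu>"
proof -
  have "z t1 \<le> \<bar>z0\<bar> * exp (- \<mu> * (t1 - T)) + B / \<mu>"
    using assms by (intro linear_ode_upper_bound[of T z a b z0 \<mu> B]) (auto simp: abs_le_iff)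
  moreover have "- z t1 \<le> \<bar>- z0\<bar> * exp (- \<mu> * (t1 - T)) + B / \<mu>"
    using assms
    by (intro linear_ode_upper_bound[of T "\<lambda>t. - z t" a "\<lambda>t. - b t"])
       (auto intro!: tendsto_minus derivative_eq_intros simp: abs_le_iff)
  ultimately show ?thesis by simp
qed

lemma bessel_inequality:
  fixes Y :: "nat \<Rightarrow> nat \<Rightarrow> real" and v :: "nat \<Rightarrow> real"
  assumes orth: "\<And>k l. k < K \<Longrightarrow> l < K \<Longrightarrow> (\<Sum>i<N. Y i k * Y i l) = (if k = l then 1 else 0)"
  shows "(\<Sum>k<K. (\<Sum>i<N. Y i k * v i)\<^sup>2) \<le> (\<Sum>i<N. (v i)\<^sup>2)"
proof -
  define c where "c k = (\<Sum>i<N. Y i k * v i)" for k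
  define p where "p i = (\<Sum>k<K. c k * Y i k)" for i
  have "(\<Sum>i<N. v i * p i) = (\<Sum>k<K. \<Sum>i<N. c k * (Y i k * v i))"
    unfolding p_def by (subst sum.swap) (simp add: sum_distrib_left mult_ac)
  also have "\<dots> = (\<Sum>k<K. (c k)\<^sup>2)"
    by (simp add: c_def sum_distrib_left power2_eq_square)
  finally have cross: "(\<Sum>i<N. v i * p i) = (\<Sum>k<K. (c k)\<^sup>2)" .
  have "(\<Sum>i<N. (p i)\<^sup>2) = (\<Sum>k<K. \<Sum>l<K. c k * c l * (\<Sum>i<N. Y i k * Y i l))"
    unfolding p_def power2_eq_square sum_product
    by (subst sum.swap, subst sum.swap) (simp add: sum_distrib_left mult_ac)
  also have "\<dots> = (\<Sum>k<K. \<Sum>l<K. if k = l then c k * c l else 0)"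
    using orth by (intro sum.cong refl) auto
  also have "\<dots> = (\<Sum>k<K. (c k)\<^sup>2)"
    by (simp add: power2_eq_square)
  finally have norm_p: "(\<Sum>i<N. (p i)\<^sup>2) = (\<Sum>k<K. (c k)\<^sup>2)" .
  have "0 \<le> (\<Sum>i<N. (v i - p i)\<^sup>2)" by (intro sum_nonneg) auto
  also have "\<dots> = (\<Sum>i<N. (v i)\<^sup>2) - (\<Sum>k<K. (c k)\<^sup>2)"
    by (simp add: power2_diff sum.distrib sum_subtractf mult.assoc sum_distrib_left[symmetric]
        cross norm_p)
  finally show ?thesis by (simp add: c_def)
qed

lemma square_add_le: "(x + y)\<^sup>2 \<le> 2 * x\<^sup>2 + 2 * (y::real)\<^sup>2"
  using zero_le_power2[of "x - y"] unfolding power2_diff power2_sum by linarith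

lemma DERIV_avg:
  "(\<And>i. i < N \<Longrightarrow> (g i has_real_derivative g' i) (at t)) \<Longrightarrow>
    ((\<lambda>s. avg N (\<lambda>i. g i s)) has_real_derivative avg N g') (at t)"
  unfolding avg_def by (intro DERIV_cdivide DERIV_sum) simp

locale blended_network =
  fixes N :: nat and M :: "nat \<Rightarrow> real" and Y :: "nat \<Rightarrow> nat \<Rightarrow> real"
    and f f' :: "nat \<Rightarrow> real \<Rightarrow> real" and \<xi> \<xi>' :: "nat \<Rightarrow> real \<Rightarrow> real"
    and \<omega> :: "real \<Rightarrow> real" and \<mu> L :: real
  assumes N_pos: "0 < N"
    and M_pos: "\<And>i. i < N \<Longrightarrow> 0 < M i"
    and Y_orthonormal: "\<And>k l. k < N - 1 \<Longrightarrow> l < N - 1 \<Longrightarrow>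
      (\<Sum>i<N. Y i k * Y i l) = (if k = l then 1 else 0)"
    and f_deriv: "\<And>i w. i < N \<Longrightarrow> (f i has_real_derivative f' i w) (at w)"
    and f'_lower: "\<And>i w. i < N \<Longrightarrow> - L \<le> f' i w / M i"
    and f'_upper: "\<And>i w. i < N \<Longrightarrow> f' i w / M i \<le> - \<mu>"
    and \<mu>_pos: "0 < \<mu>"
    and \<xi>_deriv: "\<And>i t. i < N \<Longrightarrow> 0 < t \<Longrightarrow> (\<xi> i has_real_derivative \<xi>' i t) (at t)"
    and \<omega>_deriv: "\<And>t. 0 < t \<Longrightarrow>
      (\<omega> has_real_derivative (avg N (\<lambda>i. f i (\<omega> t)) + avg N (\<lambda>i. \<xi> i t)) / avg N M) (at t)"
begin

definition imbalance :: "real \<Rightarrow> real" where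
  "imbalance t = avg N (\<lambda>i. f i (\<omega> t)) + avg N (\<lambda>i. \<xi> i t)"

abbreviation ftilde_deriv :: "real \<Rightarrow> nat \<Rightarrow> real" where
  "ftilde_deriv t k \<equiv> deriv (\<lambda>s. ftilde_comp N M Y f (\<omega> s) (\<lambda>i. \<xi> i s) k) t"

lemma L_pos: "0 < L"
  using f'_lower[OF N_pos] f'_upper[OF N_pos] \<mu>_pos
  by (meson neg_le_iff_le order.trans order_less_le_trans)

lemma sum_M_eq: "(\<Sum>i<N. M i) = real N * avg N M"
  using N_pos by (simp add: avg_def)

lemma avg_M_pos: "0 < avg N M"
  using N_pos M_pos by (auto simp: avg_def intro!: divide_pos_pos sum_pos)

lemma f'_le: "i < N \<Longrightarrow> f' i w \<le> - \<mu> * M i"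
  using f'_upper M_pos by (simp add: pos_divide_le_eq)

lemma abs_f'_le:
  assumes "i < N"
  shows "\<bar>f' i w\<bar> \<le> L * M i"
proof -
  have "- L * M i \<le> f' i w"
    using f'_lower[OF assms] M_pos[OF assms] by (simp add: pos_le_divide_eq)
  moreover have "f' i w < 0"
    using f'_le[OF assms, of w] mult_pos_pos[OF \<mu>_pos M_pos[OF assms]] by linarith
  ultimately show ?thesis by linarith
qed

lemma avg_f'_le: "avg N (\<lambda>i. f' i w) / avg N M \<le> - \<mu>"
proof -
  have "avg N (\<lambda>i. f' i w) \<le> avg N (\<lambda>i. - \<mu> * M i)"
    unfolding avg_def by (intro divide_right_mono sum_mono f'_le) auto
  also have "\<dots> = - \<mu> * avg N M"
    unfolding avg_def sum_distrib_left[symmetric] by simp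
  finally show ?thesis
    using avg_M_pos by (simp add: pos_divide_le_eq)
qed

lemma abs_avg_le:
  assumes "\<And>i. i < N \<Longrightarrow> \<bar>x i\<bar> \<le> c * M i"
  shows "\<bar>avg N x\<bar> \<le> c * avg N M"
proof -
  have "\<bar>\<Sum>i<N. x i\<bar> \<le> (\<Sum>i<N. c * M i)"
    using assms by (intro order_trans[OF sum_abs sum_mono]) simp
  then show ?thesis
    by (simp add: avg_def sum_distrib_left[symmetric] divide_right_mono)
qed

lemma f_\<omega>_has_derivative:
  "i < N \<Longrightarrow> 0 < t \<Longrightarrow>
    ((\<lambda>s. f i (\<omega> s)) has_real_derivative f' i (\<omega> t) * (imbalance t / avg N M)) (at t)"
  using \<omega>_deriv by (intro DERIV_chain2[OF f_deriv]) (simp_all add: imbalance_def)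

lemma imbalance_has_derivative:
  assumes "0 < t"
  shows "(imbalance has_real_derivative
    avg N (\<lambda>i. f' i (\<omega> t)) / avg N M * imbalance t + avg N (\<lambda>i. \<xi>' i t)) (at t)"
proof -
  have "(imbalance has_real_derivative
      avg N (\<lambda>i. f' i (\<omega> t) * (imbalance t / avg N M)) + avg N (\<lambda>i. \<xi>' i t)) (at t)"
    using assms by (subst (1) imbalance_def[abs_def])
      (intro DERIV_add DERIV_avg f_\<omega>_has_derivative \<xi>_deriv)
  moreover have "avg N (\<lambda>i. f' i (\<omega> t) * (imbalance t / avg N M)) =
      avg N (\<lambda>i. f' i (\<omega> t)) / avg N M * imbalance t"
    unfolding avg_def sum_distrib_right[symmetric] by simp
  ultimately show ?thesis by simp
qed

lemma ftilde_deriv_eq: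
  "0 < t \<Longrightarrow> ftilde_deriv t k =
    (\<Sum>i<N. Y i k * (f' i (\<omega> t) * (imbalance t / avg N M) + \<xi>' i t) / sqrt (M i))"
  unfolding ftilde_comp_def
  by (rule DERIV_imp_deriv, rule DERIV_sum, intro DERIV_cdivide DERIV_cmult DERIV_add
      f_\<omega>_has_derivative \<xi>_deriv) simp_all

lemma abs_node_rate_le:
  assumes "i < N" and "\<bar>\<xi>' i t\<bar> \<le> c * M i"
  shows "\<bar>f' i (\<omega> t) * (imbalance t / avg N M) + \<xi>' i t\<bar>
    \<le> M i * (L * \<bar>imbalance t\<bar> / avg N M + c)"
proof -
  have "\<bar>f' i (\<omega> t) * (imbalance t / avg N M)\<bar> \<le> L * M i * (\<bar>imbalance t\<bar> / avg N M)"
    unfolding abs_mult abs_divide abs_of_pos[OF avg_M_pos]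
    using abs_f'_le[OF assms(1), of "\<omega> t"] avg_M_pos by (intro mult_right_mono) auto
  then show ?thesis
    using assms(2) abs_triangle_ineq[of "f' i (\<omega> t) * (imbalance t / avg N M)" "\<xi>' i t"]
    by (simp add: algebra_simps)
qed

lemma ftilde_deriv_sq_le:
  assumes "0 < t" and "\<And>i. i < N \<Longrightarrow> \<bar>\<xi>' i t\<bar> \<le> c * M i"
  shows "(\<Sum>k<N-1. (ftilde_deriv t k)\<^sup>2)
    \<le> real N * avg N M * (L * \<bar>imbalance t\<bar> / avg N M + c)\<^sup>2"
proof -
  define R where "R = L * \<bar>imbalance t\<bar> / avg N M + c"
  define v where "v i = (f' i (\<omega> t) * (imbalance t / avg N M) + \<xi>' i t) / sqrt (M i)" for i
  have "(\<Sum>k<N-1. (ftilde_deriv t k)\<^sup>2) = (\<Sum>k<N-1. (\<Sum>i<N. Y i k * v i)\<^sup>2)"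
    using ftilde_deriv_eq[OF \<open>0 < t\<close>] by (simp add: v_def)
  also have "\<dots> \<le> (\<Sum>i<N. (v i)\<^sup>2)"
    by (rule bessel_inequality[OF Y_orthonormal])
  also have "\<dots> \<le> (\<Sum>i<N. M i * R\<^sup>2)"
  proof (intro sum_mono)
    fix i assume "i \<in> {..<N}"
    then have i: "i < N" by simp
    have "(v i)\<^sup>2 = (f' i (\<omega> t) * (imbalance t / avg N M) + \<xi>' i t)\<^sup>2 / M i"
      using M_pos[OF i] by (simp add: v_def power_divide)
    also have "\<dots> \<le> (M i * R)\<^sup>2 / M i"
      unfolding R_def using abs_node_rate_le[OF i assms(2)[OF i]] M_pos[OF i]
      by (intro divide_right_mono) (simp_all add: abs_le_square_iff[symmetric])
    also have "\<dots> = M i * R\<^sup>2"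
      using M_pos[OF i] by (simp add: power2_eq_square)
    finally show "(v i)\<^sup>2 \<le> M i * R\<^sup>2" .
  qed
  also have "\<dots> = real N * avg N M * R\<^sup>2"
    by (simp add: sum_distrib_right[symmetric] sum_M_eq)
  finally show ?thesis unfolding R_def .
qed

lemma imbalance_bound:
  assumes "0 \<le> T" "T < t" "0 \<le> c"
    and "\<And>s i. T < s \<Longrightarrow> i < N \<Longrightarrow> \<bar>\<xi>' i s\<bar> \<le> c * M i"
    and "(imbalance \<longlongrightarrow> z0) (at_right T)"
  shows "\<bar>imbalance t\<bar> \<le> \<bar>z0\<bar> * exp (- \<mu> * (t - T)) + c * avg N M / \<mu>"
proof (rule linear_ode_abs_bound)
  show "(imbalance has_real_derivative
      avg N (\<lambda>i. f' i (\<omega> s)) / avg N M * imbalance s + avg N (\<lambda>i. \<xi>' i s)) (at s)"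
    if "T < s" for s
    using that assms(1) by (intro imbalance_has_derivative) simp
  show "\<bar>avg N (\<lambda>i. \<xi>' i s)\<bar> \<le> c * avg N M" if "T < s" for s
    using that assms(4) by (intro abs_avg_le) simp
qed (use assms avg_f'_le \<mu>_pos avg_M_pos in auto)

lemma ftilde_deriv_bound:
  assumes "0 \<le> T" "T < t" "0 \<le> c"
    and "\<And>s i. T < s \<Longrightarrow> i < N \<Longrightarrow> \<bar>\<xi>' i s\<bar> \<le> c * M i"
    and "(imbalance \<longlongrightarrow> z0) (at_right T)"
  shows "(\<Sum>k<N-1. (ftilde_deriv t k)\<^sup>2) \<le> 2 * real N * avg N M * c\<^sup>2 * (1 + L / \<mu>)\<^sup>2
    + 2 * real N * L\<^sup>2 / avg N M * \<bar>z0\<bar>\<^sup>2 * exp (- 2 * \<mu> * (t - T))"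
proof -
  define e where "e = exp (- \<mu> * (t - T))"
  define Mb where "Mb = avg N M"
  have "Mb > 0" using avg_M_pos by (simp add: Mb_def)
  have "(\<Sum>k<N-1. (ftilde_deriv t k)\<^sup>2) \<le> real N * Mb * (L * \<bar>imbalance t\<bar> / Mb + c)\<^sup>2"
    unfolding Mb_def using assms by (intro ftilde_deriv_sq_le) auto
  also have "\<dots> \<le> real N * Mb * (L * (\<bar>z0\<bar> * e + c * Mb / \<mu>) / Mb + c)\<^sup>2"
    unfolding e_def Mb_def using imbalance_bound[OF assms] L_pos avg_M_pos assms(3)
    by (intro mult_left_mono power_mono add_right_mono divide_right_mono mult_left_mono) auto
  also have "L * (\<bar>z0\<bar> * e + c * Mb / \<mu>) / Mb + c = c * (1 + L / \<mu>) + L * \<bar>z0\<bar> * e / Mb"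
    using \<open>Mb > 0\<close> \<mu>_pos by (simp add: field_simps)
  also have "real N * Mb * (c * (1 + L / \<mu>) + L * \<bar>z0\<bar> * e / Mb)\<^sup>2
      \<le> real N * Mb * (2 * (c * (1 + L / \<mu>))\<^sup>2 + 2 * (L * \<bar>z0\<bar> * e / Mb)\<^sup>2)"
    using \<open>Mb > 0\<close> by (intro mult_left_mono square_add_le) auto
  also have "\<dots> = 2 * real N * Mb * c\<^sup>2 * (1 + L / \<mu>)\<^sup>2 + 2 * real N * L\<^sup>2 / Mb * \<bar>z0\<bar>\<^sup>2 * e\<^sup>2"
    using \<open>Mb > 0\<close> by (simp add: field_simps power2_eq_square)
  also have "e\<^sup>2 = exp (- 2 * \<mu> * (t - T))"
    by (simp add: e_def power2_eq_square exp_add[symmetric])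
  finally show ?thesis unfolding Mb_def .
qed

lemma imbalance_tendsto_at_right_0:
  assumes "continuous_on {0..} \<omega>" and "\<And>i. i < N \<Longrightarrow> (\<xi> i \<longlongrightarrow> \<xi>0 i) (at_right 0)"
  shows "(imbalance \<longlongrightarrow> avg N (\<lambda>i. f i (\<omega> 0)) + avg N \<xi>0) (at_right 0)"
proof -
  have "(\<omega> \<longlongrightarrow> \<omega> 0) (at_right 0)"
    using assms(1) by (auto simp: continuous_on_def intro: tendsto_within_subset)
  then show ?thesis
    unfolding imbalance_def[abs_def] avg_def using assms(2) N_pos
    by (intro tendsto_intros isCont_tendsto_compose[OF DERIV_isCont[OF f_deriv]]) auto
qed

lemma ftilde_deriv_bound_SUP:
  fixes C :: ereal
  assumes C: "\<And>i t. i < N \<Longrightarrow> 0 < t \<Longrightarrow> ereal (\<bar>\<xi>' i t\<bar> / M i) \<le> C" "C < \<infinity>"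
    and "continuous_on {0..} \<omega>" and "\<And>i. i < N \<Longrightarrow> (\<xi> i \<longlongrightarrow> \<xi>0 i) (at_right 0)"
    and "0 < t"
  shows "(\<Sum>k<N-1. (ftilde_deriv t k)\<^sup>2)
    \<le> 2 * real N * avg N M * (real_of_ereal C)\<^sup>2 * (1 + L / \<mu>)\<^sup>2
      + 2 * real N * L\<^sup>2 / avg N M * \<bar>avg N (\<lambda>i. f i (\<omega> 0)) + avg N \<xi>0\<bar>\<^sup>2 * exp (- 2 * \<mu> * t)"
proof -
  have "0 \<le> C"
    using C(1)[OF N_pos, of 1] M_pos[OF N_pos] by (auto intro: order_trans[rotated])
  with C(2) obtain c where c: "C = ereal c" "0 \<le> c" by (cases C) auto
  have "\<bar>\<xi>' i s\<bar> \<le> c * M i" if "0 < s" "i < N" for s i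
    using C(1)[OF that(2,1)] M_pos[OF that(2)] by (simp add: c pos_divide_le_eq)
  then show ?thesis
    using ftilde_deriv_bound[OF order.refl \<open>0 < t\<close> c(2) _ imbalance_tendsto_at_right_0] assms
    by (simp add: c)
qed

lemma ftilde_deriv_Limsup_le_eventually:
  assumes "0 \<le> c" and "eventually (\<lambda>s. \<forall>i<N. \<bar>\<xi>' i s\<bar> \<le> c * M i) at_top"
  shows "Limsup at_top (\<lambda>t. ereal (\<Sum>k<N-1. (ftilde_deriv t k)\<^sup>2))
    \<le> ereal (2 * real N * avg N M * c\<^sup>2 * (1 + L / \<mu>)\<^sup>2)"
proof -
  obtain T where "0 < T" and T: "\<And>s i. T < s \<Longrightarrow> i < N \<Longrightarrow> \<bar>\<xi>' i s\<bar> \<le> c * M i"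
    using assms(2) unfolding eventually_at_top_dense
    by (metis (full_types) gt_ex less_trans max.strict_boundedE)
  define A where "A = 2 * real N * avg N M * c\<^sup>2 * (1 + L / \<mu>)\<^sup>2"
  define E where "E = 2 * real N * L\<^sup>2 / avg N M * \<bar>imbalance T\<bar>\<^sup>2"
  have "(imbalance \<longlongrightarrow> imbalance T) (at_right T)"
    using DERIV_isCont[OF imbalance_has_derivative[OF \<open>0 < T\<close>]]
    by (simp add: isCont_def filterlim_at_split)
  note bound = ftilde_deriv_bound[OF less_imp_le[OF \<open>0 < T\<close>] _ assms(1) T this]
  have "\<forall>\<^sub>F t in at_top.
      ereal (\<Sum>k<N-1. (ftilde_deriv t k)\<^sup>2) \<le> ereal (A + E * exp (- 2 * \<mu> * (t - T)))"
    using eventually_gt_at_top[of T]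
    by eventually_elim (simp only: A_def E_def ereal_less_eq(3) bound)
  then have "Limsup at_top (\<lambda>t. ereal (\<Sum>k<N-1. (ftilde_deriv t k)\<^sup>2))
      \<le> Limsup at_top (\<lambda>t. ereal (A + E * exp (- 2 * \<mu> * (t - T))))"
    by (rule Limsup_mono)
  also have "\<dots> = ereal A"
    using \<mu>_pos by (intro lim_imp_Limsup tendsto_ereal) (simp, real_asymp)
  finally show ?thesis unfolding A_def .
qed

lemma ftilde_deriv_Limsup_le:
  fixes C :: ereal
  assumes C: "\<And>i. i < N \<Longrightarrow> Limsup at_top (\<lambda>t. ereal (\<bar>\<xi>' i t\<bar> / M i)) \<le> C" "C < \<infinity>"
  shows "Limsup at_top (\<lambda>t. ereal (\<Sum>k<N-1. (ftilde_deriv t k)\<^sup>2))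
    \<le> ereal (2 * real N * avg N M * (real_of_ereal C)\<^sup>2 * (1 + L / \<mu>)\<^sup>2)"
proof -
  define K where "K y = 2 * real N * avg N M * y\<^sup>2 * (1 + L / \<mu>)\<^sup>2" for y
  have "0 \<le> Limsup at_top (\<lambda>t. ereal (\<bar>\<xi>' 0 t\<bar> / M 0))"
    using M_pos[OF N_pos] by (intro le_Limsup) auto
  then have "0 \<le> C" using C(1)[OF N_pos] by simp
  with C(2) obtain c where c: "C = ereal c" "0 \<le> c" by (cases C) auto
  have bound: "Limsup at_top (\<lambda>t. ereal (\<Sum>k<N-1. (ftilde_deriv t k)\<^sup>2)) \<le> ereal (K y)"
    if "c < y" for y
    unfolding K_def
  proof (rule ftilde_deriv_Limsup_le_eventually)
    show "0 \<le> y" using c(2) that by simp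
    have "\<forall>\<^sub>F s in at_top. \<bar>\<xi>' i s\<bar> \<le> y * M i" if "i < N" for i
    proof -
      have "Limsup at_top (\<lambda>t. ereal (\<bar>\<xi>' i t\<bar> / M i)) < ereal y"
        using C(1)[OF that] \<open>c < y\<close> by (simp add: c order.strict_trans1)
      from Limsup_lessD[OF this] show ?thesis
        by eventually_elim (simp add: M_pos[OF that] pos_divide_less_eq)
    qed
    then have "\<forall>\<^sub>F s in at_top. \<forall>i\<in>{..<N}. \<bar>\<xi>' i s\<bar> \<le> y * M i"
      by (intro eventually_ball_finite) auto
    then show "\<forall>\<^sub>F s in at_top. \<forall>i<N. \<bar>\<xi>' i s\<bar> \<le> y * M i"
      by (simp add: Ball_def)
  qed
  have "((\<lambda>y. ereal (K y)) \<longlongrightarrow> ereal (K c)) (at_right c)"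
    unfolding K_def by (intro tendsto_intros)
  moreover have "\<forall>\<^sub>F y in at_right c.
      Limsup at_top (\<lambda>t. ereal (\<Sum>k<N-1. (ftilde_deriv t k)\<^sup>2)) \<le> ereal (K y)"
    using eventually_at_right_less[of c] by eventually_elim (rule bound)
  ultimately have "Limsup at_top (\<lambda>t. ereal (\<Sum>k<N-1. (ftilde_deriv t k)\<^sup>2)) \<le> ereal (K c)"
    by (rule tendsto_lowerbound) simp
  then show ?thesis by (simp add: K_def c)
qed

end

theorem lemmaA1:
  fixes N :: nat and M :: "nat \<Rightarrow> real" and Y :: "nat \<Rightarrow> nat \<Rightarrow> real"
    and f f' :: "nat \<Rightarrow> real \<Rightarrow> real"
    and \<xi> \<xi>' :: "nat \<Rightarrow> real \<Rightarrow> real" and \<xi>0 :: "nat \<Rightarrow> real"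
    and \<omega>b :: "real \<Rightarrow> real" and \<mu> L :: real
  assumes N: "N \<ge> 2"
    and Mpos: "\<forall>i<N. M i > 0"
    and Y: "Y_basis N M Y"
    and f0: "\<forall>i<N. f i 0 = 0"
    and fderiv: "\<forall>i<N. \<forall>w. (f i has_real_derivative f' i w) (at w)"
    and fcont: "\<forall>i<N. continuous_on UNIV (f' i)"
    and \<mu>: "\<mu> > 0" and L: "L > 0"
    and fbounds: "\<forall>i<N. \<forall>w. - L \<le> f' i w / M i \<and> f' i w / M i \<le> - \<mu>"
    and \<xi>deriv: "\<forall>i<N. \<forall>t>0. (\<xi> i has_real_derivative \<xi>' i t) (at t)"
    and \<xi>cont: "\<forall>i<N. continuous_on {0<..} (\<xi>' i)"
    and \<xi>jump: "\<forall>i<N. (\<xi> i \<longlongrightarrow> \<xi>0 i) (at_right 0)"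
    and \<omega>cont: "continuous_on {0..} \<omega>b"
    and \<omega>ode: "\<forall>t>0. (\<omega>b has_real_derivative
                  (avg N (\<lambda>i. f i (\<omega>b t)) + avg N (\<lambda>i. \<xi> i t)) / avg N M) (at t)"
  shows
   "(let C = Max ((\<lambda>i. SUP t\<in>{0<..}. ereal (\<bar>\<xi>' i t\<bar> / M i)) ` {..<N}) in
      C < \<infinity> \<longrightarrow>
      (\<forall>t>0. (\<Sum>k<N-1. (deriv (\<lambda>s. ftilde_comp N M Y f (\<omega>b s) (\<lambda>i. \<xi> i s) k) t)\<^sup>2)
         \<le> 2 * real N * avg N M * (real_of_ereal C)\<^sup>2 * (1 + L / \<mu>)\<^sup>2
           + 2 * real N * L\<^sup>2 / avg N M
             * \<bar>avg N (\<lambda>i. f i (\<omega>b 0)) + avg N \<xi>0\<bar>\<^sup>2 * exp (- 2 * \<mu> * t)))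
    \<and>
    (let Clim = Max ((\<lambda>i. Limsup at_top (\<lambda>t. ereal (\<bar>\<xi>' i t\<bar> / M i))) ` {..<N}) in
      Clim < \<infinity> \<longrightarrow>
      Limsup at_top (\<lambda>t. ereal (\<Sum>k<N-1.
          (deriv (\<lambda>s. ftilde_comp N M Y f (\<omega>b s) (\<lambda>i. \<xi> i s) k) t)\<^sup>2))
        \<le> ereal (2 * real N * avg N M * (real_of_ereal Clim)\<^sup>2 * (1 + L / \<mu>)\<^sup>2))"
proof -
  interpret blended_network N M Y f f' \<xi> \<xi>' \<omega>b \<mu> L
    using assms by unfold_locales (auto simp: Y_basis_def)
  define C where "C = Max ((\<lambda>i. SUP t\<in>{0<..}. ereal (\<bar>\<xi>' i t\<bar> / M i)) ` {..<N})"
  define Clim where "Clim = Max ((\<lambda>i. Limsup at_top (\<lambda>t. ereal (\<bar>\<xi>' i t\<bar> / M i))) ` {..<N})"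
  have C_bound: "ereal (\<bar>\<xi>' i t\<bar> / M i) \<le> C" if "i < N" "0 < t" for i t
  proof -
    have "ereal (\<bar>\<xi>' i t\<bar> / M i) \<le> (SUP s\<in>{0<..}. ereal (\<bar>\<xi>' i s\<bar> / M i))"
      using that by (intro SUP_upper) auto
    also have "\<dots> \<le> C"
      unfolding C_def using that by (intro Max_ge) auto
    finally show ?thesis .
  qed
  have Clim_bound: "Limsup at_top (\<lambda>t. ereal (\<bar>\<xi>' i t\<bar> / M i)) \<le> Clim" if "i < N" for i
    unfolding Clim_def using that by (intro Max_ge) auto
  have \<xi>_lim: "\<And>i. i < N \<Longrightarrow> (\<xi> i \<longlongrightarrow> \<xi>0 i) (at_right 0)"
    using \<xi>jump by simp
  show ?thesis
    unfolding Let_def C_def[symmetric] Clim_def[symmetric]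
    using ftilde_deriv_bound_SUP[OF C_bound _ \<omega>cont \<xi>_lim] ftilde_deriv_Limsup_le[OF Clim_bound]
    by blast
qed

end
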